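(* Let $f\in\mathbb{R}[x_1,\ldots,x_n]$ be a homogeneous cubic polynomial (homogeneous of degree $3$) which is irreducible in $\mathbb{R}[x_1,\ldots,x_n]$, $f\not\equiv 0$. Then the zero set $\mathcal{F}(f)=f^{-1}(0)\subset\mathbb{R}^n$ contains a regular point of $f$, i.e. a point $x\in\mathbb{R}^n$ with $f(x)=0$ and $\nabla f(x)\neq 0$.
   Context: $\mathcal{F}(f):=\{x\in\mathbb{R}^n: f(x)=0\}$ denotes the zero set of $f$ in $\mathbb{R}^n$. *)

theory Defs
  imports "HOL-Analysis.Analysis" "HOL-Library.Poly_Mapping"
    "HOL-Computational_Algebra.Factorial_Ring"
begin

text \<open>Real polynomials in the variables indexed by the finite type 'n:
  a polynomial is a finitely supported map from monomials (exponent vectors) to real coefficients.  With 'n linearly ordered this type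
  is an integral domain (instance from Poly_Mapping), i.e. the ring
  R[x_i : i in 'n].\<close>

type_synonym 'n rpoly = "('n \<Rightarrow>\<^sub>0 nat) \<Rightarrow>\<^sub>0 real"

definition rpoly_eval :: "('n::finite) rpoly \<Rightarrow> real ^ 'n \<Rightarrow> real" where
  "rpoly_eval f x = (\<Sum>(m::'n \<Rightarrow>\<^sub>0 nat)\<in>Poly_Mapping.keys f. Poly_Mapping.lookup f m * (\<Prod>i\<in>UNIV. (x $ i) ^ Poly_Mapping.lookup m i))"

definition mon_deg :: "('n::finite \<Rightarrow>\<^sub>0 nat) \<Rightarrow> nat" where
  "mon_deg m = (\<Sum>i\<in>UNIV. Poly_Mapping.lookup m i)"

definition homogeneous_of_degree :: "('n::finite) rpoly \<Rightarrow> nat \<Rightarrow> bool" where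
  "homogeneous_of_degree f d \<longleftrightarrow> (\<forall>m\<in>Poly_Mapping.keys f. mon_deg m = d)"

definition rpoly_pderiv :: "'n \<Rightarrow> ('n::finite) rpoly \<Rightarrow> 'n rpoly" where
  "rpoly_pderiv i f =
     (\<Sum>(m::'n \<Rightarrow>\<^sub>0 nat)\<in>Poly_Mapping.keys f. Poly_Mapping.single (m - Poly_Mapping.single i 1)
                     (Poly_Mapping.lookup f m * of_nat (Poly_Mapping.lookup m i)))"

definition rpoly_grad :: "('n::finite) rpoly \<Rightarrow> real ^ 'n \<Rightarrow> real ^ 'n" where
  "rpoly_grad f x = (\<chi> i. rpoly_eval (rpoly_pderiv i f) x)"

definition zero_set :: "('n::finite) rpoly \<Rightarrow> (real ^ 'n) set" where
  "zero_set f = {x. rpoly_eval f x = 0}"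

end

theory Submission
  imports Defs "HOL-Computational_Algebra.Polynomial"
begin

text \<open>Suppose every zero of the cubic form \<open>f\<close> is singular, and pick \<open>p\<close> with \<open>f p = a \<noteq> 0\<close>.
  For every \<open>y\<close> the cubic \<open>s \<mapsto> f (s p + y) = a s\<^sup>3 + h\<^sub>2 s\<^sup>2 + h\<^sub>1 s + f y\<close> then has only
  multiple roots (a root is a zero of \<open>f\<close>, where the derivative in direction \<open>p\<close> vanishes),
  so it is a perfect cube and \<open>27 a\<^sup>2 f y = h\<^sub>2\<^sup>3\<close>.  By homogeneity \<open>h\<^sub>2\<close> is the derivative
  of \<open>f\<close> at \<open>p\<close> in direction \<open>y\<close>, a linear form in \<open>y\<close>.  Hence \<open>f\<close> is a constant multiple
  of the cube of a linear form, contradicting irreducibility.\<close>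

definition monomial_eval :: "('n::finite \<Rightarrow>\<^sub>0 nat) \<Rightarrow> real^'n \<Rightarrow> real" where
  "monomial_eval m x = (\<Prod>i\<in>UNIV. (x$i) ^ Poly_Mapping.lookup m i)"

lemma rpoly_eval_eq_sum:
  fixes f :: "('n::finite) rpoly"
  assumes "finite S" "Poly_Mapping.keys f \<subseteq> S"
  shows "rpoly_eval f x = (\<Sum>m\<in>S. Poly_Mapping.lookup f m * monomial_eval m x)"
  unfolding rpoly_eval_def monomial_eval_def
  by (rule sum.mono_neutral_left) (use assms in \<open>auto simp: in_keys_iff\<close>)

lemma rpoly_eval_zero [simp]: "rpoly_eval (0::('n::finite) rpoly) x = 0"
  by (simp add: rpoly_eval_def)

lemma rpoly_eval_add: "rpoly_eval (f + g) x = rpoly_eval f x + rpoly_eval (g::('n::finite) rpoly) x"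
proof -
  let ?S = "Poly_Mapping.keys f \<union> Poly_Mapping.keys g"
  have "Poly_Mapping.keys (f + g) \<subseteq> ?S" by (rule keys_add)
  then show ?thesis
    by (simp add: rpoly_eval_eq_sum[of ?S] lookup_add distrib_right sum.distrib)
qed

lemma rpoly_eval_uminus: "rpoly_eval (- f) x = - rpoly_eval (f::('n::finite) rpoly) x"
  by (simp add: rpoly_eval_eq_sum[of "Poly_Mapping.keys f"] sum_negf)

lemma rpoly_eval_diff: "rpoly_eval (f - g) x = rpoly_eval f x - rpoly_eval (g::('n::finite) rpoly) x"
  using rpoly_eval_add[of f "- g" x] by (simp add: rpoly_eval_uminus)

lemma rpoly_eval_single:
  "rpoly_eval (Poly_Mapping.single m c :: ('n::finite) rpoly) x = c * monomial_eval m x"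
  by (simp add: rpoly_eval_eq_sum[of "{m}"] lookup_single)

lemma rpoly_eval_sum: "rpoly_eval (\<Sum>a\<in>A. F a :: ('n::finite) rpoly) x = (\<Sum>a\<in>A. rpoly_eval (F a) x)"
  by (induction A rule: infinite_finite_induct) (auto simp: rpoly_eval_add)

lemma poly_mapping_sum_single:
  "(f::'a \<Rightarrow>\<^sub>0 'b::comm_monoid_add) = (\<Sum>m\<in>Poly_Mapping.keys f. Poly_Mapping.single m (Poly_Mapping.lookup f m))"
  by (rule poly_mapping_eqI) (auto simp: lookup_sum lookup_single when_def in_keys_iff)

lemma monomial_eval_add: "monomial_eval (m + n) x = monomial_eval m x * monomial_eval n x"
  by (simp add: monomial_eval_def lookup_add power_add prod.distrib)

lemma rpoly_eval_mult:
  "rpoly_eval (f * g) x = rpoly_eval f x * rpoly_eval (g::('n::{finite,linorder}) rpoly) x"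
proof -
  have "f * g = (\<Sum>m\<in>Poly_Mapping.keys f. Poly_Mapping.single m (Poly_Mapping.lookup f m)) *
                (\<Sum>n\<in>Poly_Mapping.keys g. Poly_Mapping.single n (Poly_Mapping.lookup g n))"
    using poly_mapping_sum_single[of f] poly_mapping_sum_single[of g] by simp
  also have "\<dots> = (\<Sum>m\<in>Poly_Mapping.keys f. \<Sum>n\<in>Poly_Mapping.keys g.
      Poly_Mapping.single (m + n) (Poly_Mapping.lookup f m * Poly_Mapping.lookup g n))"
    by (simp add: sum_distrib_left sum_distrib_right mult_single sum.swap[of _ "Poly_Mapping.keys g"])
  finally have "rpoly_eval (f * g) x = (\<Sum>m\<in>Poly_Mapping.keys f. \<Sum>n\<in>Poly_Mapping.keys g.
      Poly_Mapping.lookup f m * monomial_eval m x * (Poly_Mapping.lookup g n * monomial_eval n x))"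
    by (simp add: rpoly_eval_sum rpoly_eval_single monomial_eval_add mult_ac)
  also have "\<dots> = rpoly_eval f x * rpoly_eval g x"
    by (simp add: rpoly_eval_def monomial_eval_def sum_product)
  finally show ?thesis .
qed

lemma rpoly_eval_one [simp]: "rpoly_eval (1::('n::{finite,linorder}) rpoly) x = 1"
  using rpoly_eval_single[of 0 1 x] by (simp add: monomial_eval_def)

lemma rpoly_eval_unit_nonzero:
  assumes "(u::('n::{finite,linorder}) rpoly) dvd 1"
  shows "rpoly_eval u x \<noteq> 0"
proof -
  from assms obtain v where "1 = u * v" by (auto elim: dvdE)
  then have "1 = rpoly_eval u x * rpoly_eval v x" by (metis rpoly_eval_mult rpoly_eval_one)
  then show ?thesis by auto
qed

section \<open>Derivatives along lines and the identity theorem\<close>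

lemma monomial_eval_diff_single:
  assumes "Poly_Mapping.lookup m j > 0"
  shows "monomial_eval (m - Poly_Mapping.single j 1) z =
    (z$j) ^ (Poly_Mapping.lookup m j - 1) * (\<Prod>i\<in>UNIV - {j}. (z$i) ^ Poly_Mapping.lookup m i)"
proof -
  let ?m' = "m - Poly_Mapping.single j 1"
  have "monomial_eval ?m' z =
      (z$j) ^ Poly_Mapping.lookup ?m' j * (\<Prod>i\<in>UNIV - {j}. (z$i) ^ Poly_Mapping.lookup ?m' i)"
    unfolding monomial_eval_def by (simp add: prod.remove[of UNIV j])
  also have "\<dots> = (z$j) ^ (Poly_Mapping.lookup m j - 1) * (\<Prod>i\<in>UNIV - {j}. (z$i) ^ Poly_Mapping.lookup m i)"
    by (auto simp: lookup_minus lookup_single intro!: prod.cong)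
  finally show ?thesis .
qed

lemma has_real_derivative_monomial_eval_line:
  "((\<lambda>s. monomial_eval m (s *\<^sub>R v + w)) has_real_derivative
     (\<Sum>j\<in>UNIV. v$j * (of_nat (Poly_Mapping.lookup m j) *
        monomial_eval (m - Poly_Mapping.single j 1) (s *\<^sub>R v + w)))) (at s)"
proof -
  let ?z = "s *\<^sub>R v + w"
  let ?e = "Poly_Mapping.lookup m"
  have "((\<lambda>u. \<Prod>j\<in>UNIV. (u * v$j + w$j) ^ ?e j) has_real_derivative
      (\<Sum>j\<in>UNIV. of_nat (?e j) * (s * v$j + w$j) ^ (?e j - 1) * v$j
        * (\<Prod>i\<in>UNIV - {j}. (s * v$i + w$i) ^ ?e i))) (at s)"
    by (rule has_field_derivative_prod) (auto intro!: derivative_eq_intros)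
  moreover have "of_nat (?e j) * (s * v$j + w$j) ^ (?e j - 1) * v$j
        * (\<Prod>i\<in>UNIV - {j}. (s * v$i + w$i) ^ ?e i)
      = v$j * (of_nat (?e j) * monomial_eval (m - Poly_Mapping.single j 1) ?z)" (is "_ = ?R j") for j
  proof (cases "?e j = 0")
    case False
    have "monomial_eval (m - Poly_Mapping.single j 1) ?z =
        (?z$j) ^ (?e j - 1) * (\<Prod>i\<in>UNIV - {j}. (?z$i) ^ ?e i)"
      by (rule monomial_eval_diff_single) (use False in simp)
    then show ?thesis by (simp add: mult_ac)
  qed simp
  ultimately have "((\<lambda>u. \<Prod>j\<in>UNIV. (u * v$j + w$j) ^ ?e j) has_real_derivative (\<Sum>j\<in>UNIV. ?R j)) (at s)"
    by (metis (no_types, lifting) sum.cong)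
  then show ?thesis
    by (simp add: monomial_eval_def)
qed

lemma rpoly_eval_pderiv:
  "rpoly_eval (rpoly_pderiv j g) z = (\<Sum>m\<in>Poly_Mapping.keys g.
     Poly_Mapping.lookup g m * (of_nat (Poly_Mapping.lookup m j) * monomial_eval (m - Poly_Mapping.single j 1) z))"
  unfolding rpoly_pderiv_def by (simp add: rpoly_eval_sum rpoly_eval_single mult_ac)

lemma has_real_derivative_rpoly_eval_line:
  fixes g :: "('n::finite) rpoly"
  shows "((\<lambda>s. rpoly_eval g (s *\<^sub>R v + w)) has_real_derivative
     v \<bullet> rpoly_grad g (s *\<^sub>R v + w)) (at s)"
proof -
  let ?z = "s *\<^sub>R v + w"
  have "((\<lambda>s. \<Sum>m\<in>Poly_Mapping.keys g. Poly_Mapping.lookup g m * monomial_eval m (s *\<^sub>R v + w))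
      has_real_derivative (\<Sum>m\<in>Poly_Mapping.keys g. Poly_Mapping.lookup g m * (\<Sum>j\<in>UNIV. v$j *
        (of_nat (Poly_Mapping.lookup m j) * monomial_eval (m - Poly_Mapping.single j 1) ?z)))) (at s)"
    by (auto intro!: derivative_eq_intros has_real_derivative_monomial_eval_line simp: mult.commute)
  moreover have "(\<Sum>m\<in>Poly_Mapping.keys g. Poly_Mapping.lookup g m * (\<Sum>j\<in>UNIV. v$j *
        (of_nat (Poly_Mapping.lookup m j) * monomial_eval (m - Poly_Mapping.single j 1) ?z)))
      = v \<bullet> rpoly_grad g ?z"
    by (simp add: inner_vec_def rpoly_grad_def rpoly_eval_pderiv sum_distrib_left
        sum.swap[of _ UNIV] mult_ac)
  ultimately show ?thesis by (simp add: rpoly_eval_eq_sum[of "Poly_Mapping.keys g"])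
qed

lemma rpoly_pderiv_eval_eq_zero:
  assumes "\<And>x. rpoly_eval (g::('n::finite) rpoly) x = 0"
  shows "rpoly_eval (rpoly_pderiv j g) x = 0"
proof -
  have "((\<lambda>s. rpoly_eval g (s *\<^sub>R axis j 1 + x)) has_real_derivative
      axis j 1 \<bullet> rpoly_grad g (0 *\<^sub>R axis j 1 + x)) (at 0)"
    by (rule has_real_derivative_rpoly_eval_line)
  then have "((\<lambda>s. 0) has_real_derivative rpoly_eval (rpoly_pderiv j g) x) (at 0)"
    using assms by (simp add: inner_axis' rpoly_grad_def)
  then show ?thesis using DERIV_const DERIV_unique by blast
qed

lemma add_single_diff_single:
  assumes "Poly_Mapping.lookup (m::'a \<Rightarrow>\<^sub>0 nat) j > 0"
  shows "m - Poly_Mapping.single j 1 + Poly_Mapping.single j 1 = m"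
  by (rule poly_mapping_eqI) (use assms in \<open>auto simp: lookup_add lookup_minus lookup_single when_def\<close>)

lemma lookup_rpoly_pderiv:
  "Poly_Mapping.lookup (rpoly_pderiv j (g::('n::finite) rpoly)) m' =
     Poly_Mapping.lookup g (m' + Poly_Mapping.single j 1) * of_nat (Poly_Mapping.lookup m' j + 1)"
proof -
  let ?M = "m' + Poly_Mapping.single j 1"
  have summand: "(Poly_Mapping.lookup g m * of_nat (Poly_Mapping.lookup m j) when m - Poly_Mapping.single j 1 = m')
     = (if m = ?M then Poly_Mapping.lookup g m * of_nat (Poly_Mapping.lookup m j) else 0)" for m
  proof (cases "Poly_Mapping.lookup m j > 0")
    case True
    then have "m - Poly_Mapping.single j 1 = m' \<longleftrightarrow> m = ?M"
      using add_single_diff_single[OF True] by (metis add_diff_cancel_right')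
    then show ?thesis by (simp add: when_def)
  next
    case False
    then have "m \<noteq> ?M" by (auto simp: lookup_add)
    then show ?thesis using False by (simp add: when_def)
  qed
  have "Poly_Mapping.lookup (rpoly_pderiv j g) m' = (\<Sum>m\<in>Poly_Mapping.keys g.
      (if m = ?M then Poly_Mapping.lookup g m * of_nat (Poly_Mapping.lookup m j) else 0))"
    unfolding rpoly_pderiv_def lookup_sum lookup_single using summand by simp
  also have "\<dots> = Poly_Mapping.lookup g ?M * of_nat (Poly_Mapping.lookup ?M j)"
    by (simp add: in_keys_iff)
  finally show ?thesis by (simp add: lookup_add)
qed

lemma mon_deg_add: "mon_deg (m + n) = mon_deg m + mon_deg n"
  by (simp add: mon_deg_def lookup_add sum.distrib)

lemma mon_deg_single_one: "mon_deg (Poly_Mapping.single (j::'n::finite) 1) = 1"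
  by (simp add: mon_deg_def lookup_single when_def)

lemma monomial_eval_at_zero: "monomial_eval m (0::real^'n::finite) = (if m = 0 then 1 else 0)"
proof (cases "m = 0")
  case False
  then obtain j where "Poly_Mapping.lookup m j \<noteq> 0"
    by (metis lookup_zero poly_mapping_eqI)
  then show ?thesis unfolding monomial_eval_def by (auto intro!: prod_zero)
qed (simp add: monomial_eval_def)

lemma rpoly_eval_at_zero: "rpoly_eval (g::('n::finite) rpoly) 0 = Poly_Mapping.lookup g 0"
proof -
  have "rpoly_eval g 0 = (\<Sum>m\<in>Poly_Mapping.keys g. Poly_Mapping.lookup g m * (if m = 0 then 1 else 0))"
    by (simp add: rpoly_eval_eq_sum[of "Poly_Mapping.keys g"] monomial_eval_at_zero)
  also have "\<dots> = Poly_Mapping.lookup g 0"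
    by (simp add: if_distrib in_keys_iff cong: if_cong)
  finally show ?thesis .
qed

text \<open>Induction on the degree of the monomial: its coefficient is, up to a positive factor,
  a coefficient of lower degree of a partial derivative, which again vanishes identically.\<close>

lemma lookup_eq_zero_if_rpoly_eval_eq_zero:
  assumes "\<And>x. rpoly_eval (g::('n::finite) rpoly) x = 0"
  shows "Poly_Mapping.lookup g m = 0"
  using assms
proof (induction "mon_deg m" arbitrary: m g rule: less_induct)
  case less
  show ?case
  proof (cases "m = 0")
    case True
    then show ?thesis using less.prems by (simp flip: rpoly_eval_at_zero)
  next
    case False
    then obtain j where j: "Poly_Mapping.lookup m j > 0"
      by (metis lookup_zero poly_mapping_eqI neq0_conv)
    define m' where "m' = m - Poly_Mapping.single j 1"
    have m: "m' + Poly_Mapping.single j 1 = m"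
      using add_single_diff_single[OF j] m'_def by simp
    then have "mon_deg m' < mon_deg m"
      using mon_deg_add[of m' "Poly_Mapping.single j 1"] mon_deg_single_one[of j] by simp
    moreover have "\<And>x. rpoly_eval (rpoly_pderiv j g) x = 0"
      using rpoly_pderiv_eval_eq_zero less.prems by blast
    ultimately have "Poly_Mapping.lookup (rpoly_pderiv j g) m' = 0" using less.hyps by blast
    then show ?thesis using lookup_rpoly_pderiv[of j g m'] m by simp
  qed
qed

lemma rpoly_eq_zero_if_eval_eq_zero:
  assumes "\<And>x. rpoly_eval (g::('n::finite) rpoly) x = 0"
  shows "g = 0"
  by (rule poly_mapping_eqI) (simp add: lookup_eq_zero_if_rpoly_eval_eq_zero[OF assms])

section \<open>Homogeneous polynomials restricted to lines\<close>

lemma coeff_mult_degree_le: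
  fixes p q :: "'a::comm_semiring_0 poly"
  assumes "degree p \<le> a" "degree q \<le> b"
  shows "coeff (p * q) (a + b) = coeff p a * coeff q b"
proof (cases "degree p = a \<and> degree q = b")
  case True
  then show ?thesis using coeff_mult_degree_sum[of p q] by simp
next
  case False
  then have lt: "degree p < a \<or> degree q < b" using assms by auto
  have "degree (p * q) \<le> degree p + degree q" by (rule degree_mult_le)
  with lt assms have "degree (p * q) < a + b" by linarith
  with lt show ?thesis by (auto simp: coeff_eq_0)
qed

lemma coeff_prod_degree_le:
  fixes q :: "'a \<Rightarrow> 'b::comm_semiring_1 poly"
  assumes "finite A" "\<And>i. i \<in> A \<Longrightarrow> degree (q i) \<le> d i"
  shows "coeff (\<Prod>i\<in>A. q i) (\<Sum>i\<in>A. d i) = (\<Prod>i\<in>A. coeff (q i) (d i))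
     \<and> degree (\<Prod>i\<in>A. q i) \<le> (\<Sum>i\<in>A. d i)"
  using assms
proof (induction A rule: finite_induct)
  case (insert x A)
  then have IH: "coeff (\<Prod>i\<in>A. q i) (\<Sum>i\<in>A. d i) = (\<Prod>i\<in>A. coeff (q i) (d i))"
    "degree (\<Prod>i\<in>A. q i) \<le> (\<Sum>i\<in>A. d i)" "degree (q x) \<le> d x" by auto
  have "degree (q x * (\<Prod>i\<in>A. q i)) \<le> degree (q x) + degree (\<Prod>i\<in>A. q i)" by (rule degree_mult_le)
  then show ?case using insert.hyps IH coeff_mult_degree_le[OF IH(3) IH(2)] by simp
qed simp

lemma coeff_linear_power:
  "coeff ([:a, b:] ^ k) k = b ^ k \<and> degree ([:a, b::'a::comm_semiring_1:] ^ k) \<le> k"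
proof (induction k)
  case (Suc k)
  have d: "degree [:a, b:] \<le> 1" by simp
  have "coeff ([:a, b:] * [:a, b:] ^ k) (1 + k) = coeff [:a, b:] 1 * coeff ([:a, b:] ^ k) k"
    by (rule coeff_mult_degree_le[OF d]) (use Suc in simp)
  moreover have "degree ([:a, b:] ^ Suc k) \<le> Suc k"
    using degree_power_le[of "[:a, b:]" "Suc k"] d by (simp add: order_trans)
  ultimately show ?case using Suc by (simp del: mult_pCons_left)
qed simp

lemma monomial_eval_scaleR: "monomial_eval m (t *\<^sub>R x) = t ^ mon_deg m * monomial_eval m x"
  by (simp add: monomial_eval_def mon_deg_def power_mult_distrib prod.distrib power_sum)

lemma rpoly_eval_homogeneous:
  assumes "homogeneous_of_degree f d"
  shows "rpoly_eval f (t *\<^sub>R x) = t ^ d * rpoly_eval f x"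
proof -
  have "rpoly_eval f (t *\<^sub>R x) = (\<Sum>m\<in>Poly_Mapping.keys f. Poly_Mapping.lookup f m * monomial_eval m (t *\<^sub>R x))"
    by (simp add: rpoly_eval_eq_sum[of "Poly_Mapping.keys f"])
  also have "\<dots> = (\<Sum>m\<in>Poly_Mapping.keys f. t ^ d * (Poly_Mapping.lookup f m * monomial_eval m x))"
    by (rule sum.cong) (use assms in \<open>auto simp: monomial_eval_scaleR homogeneous_of_degree_def\<close>)
  also have "\<dots> = t ^ d * rpoly_eval f x"
    by (simp add: sum_distrib_left rpoly_eval_eq_sum[of "Poly_Mapping.keys f"])
  finally show ?thesis .
qed

text \<open>Each monomial restricts to the product of the linear polynomials \<open>[:y\<^sub>i, p\<^sub>i:]\<close>.\<close>

lemma homogeneous_rpoly_restrict_line: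
  fixes f :: "('n::finite) rpoly"
  assumes "homogeneous_of_degree f d"
  obtains H :: "real poly" where "degree H \<le> d" "coeff H d = rpoly_eval f p"
    "\<And>s. poly H s = rpoly_eval f (s *\<^sub>R p + y)"
proof
  define T where "T m = (\<Prod>i\<in>UNIV. [:y$i, p$i:] ^ Poly_Mapping.lookup m i)" for m :: "'n \<Rightarrow>\<^sub>0 nat"
  define H where "H = (\<Sum>m\<in>Poly_Mapping.keys f. smult (Poly_Mapping.lookup f m) (T m))"
  have T: "coeff (T m) (mon_deg m) = monomial_eval m p \<and> degree (T m) \<le> mon_deg m" for m
    unfolding T_def mon_deg_def monomial_eval_def
    using coeff_prod_degree_le[of UNIV "\<lambda>i. [:y$i, p$i:] ^ Poly_Mapping.lookup m i" "Poly_Mapping.lookup m"]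
    by (simp add: coeff_linear_power)
  have deg: "m \<in> Poly_Mapping.keys f \<Longrightarrow> mon_deg m = d" for m
    using assms by (simp add: homogeneous_of_degree_def)
  show "degree H \<le> d"
    unfolding H_def
  proof (rule degree_sum_le)
    fix m assume "m \<in> Poly_Mapping.keys f"
    then show "degree (smult (Poly_Mapping.lookup f m) (T m)) \<le> d"
      using T[of m] deg[of m] degree_smult_le[of "Poly_Mapping.lookup f m" "T m"] by simp
  qed simp
  have "coeff (T m) d = monomial_eval m p" if "m \<in> Poly_Mapping.keys f" for m
    using T deg that by metis
  then show "coeff H d = rpoly_eval f p"
    unfolding H_def coeff_sum by (simp add: rpoly_eval_eq_sum[of "Poly_Mapping.keys f"])
  have "poly (T m) s = monomial_eval m (s *\<^sub>R p + y)" for m s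
    unfolding T_def monomial_eval_def by (simp add: poly_prod algebra_simps)
  then show "poly H s = rpoly_eval f (s *\<^sub>R p + y)" for s
    unfolding H_def by (simp add: poly_sum rpoly_eval_eq_sum[of "Poly_Mapping.keys f"])
qed

text \<open>The reflected polynomial is the restriction of \<open>f\<close> to the line \<open>t \<mapsto> t y + p\<close>,
  and its linear coefficient is the subleading coefficient of \<open>H\<close>.\<close>

lemma homogeneous_restrict_line_coeff_pred:
  fixes f :: "('n::finite) rpoly"
  assumes hom: "homogeneous_of_degree f d" and "0 < d" and "rpoly_eval f p \<noteq> 0"
    and "degree H \<le> d" and top: "coeff H d = rpoly_eval f p"
    and H: "\<And>s. poly H s = rpoly_eval f (s *\<^sub>R p + y)"
  shows "coeff H (d - 1) = y \<bullet> rpoly_grad f p"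
proof -
  have degH: "degree H = d"
    using assms(3-5) le_degree by (metis antisym)
  have reflect: "poly (reflect_poly H) t = rpoly_eval f (t *\<^sub>R y + p)" for t
  proof (cases "t = 0")
    case True
    then show ?thesis using degH top by simp
  next
    case False
    then have "t *\<^sub>R y + p = t *\<^sub>R (inverse t *\<^sub>R p + y)" by (simp add: algebra_simps)
    then show ?thesis
      using False degH by (simp add: poly_reflect_poly_nz H rpoly_eval_homogeneous[OF hom])
  qed
  have "((\<lambda>t. rpoly_eval f (t *\<^sub>R y + p)) has_real_derivative y \<bullet> rpoly_grad f (0 *\<^sub>R y + p)) (at 0)"
    by (rule has_real_derivative_rpoly_eval_line)
  moreover have "((\<lambda>t. rpoly_eval f (t *\<^sub>R y + p)) has_real_derivative coeff H (d - 1)) (at 0)"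
    using poly_DERIV[of "reflect_poly H" 0] \<open>0 < d\<close> degH
    by (simp add: reflect poly_0_coeff_0 coeff_pderiv coeff_reflect_poly)
  ultimately show ?thesis by (simp add: DERIV_unique)
qed

section \<open>Real cubics all of whose roots are multiple\<close>

text \<open>A depressed cubic has a real root \<open>u\<^sub>0\<close>, which is multiple, so \<open>P = -3u\<^sub>0\<^sup>2\<close>
  and \<open>R = 2u\<^sub>0\<^sup>3\<close>; then \<open>-2u\<^sub>0\<close> is a root as well, and it is multiple only if \<open>u\<^sub>0 = 0\<close>.\<close>

lemma depressed_cubic_multiple_roots:
  fixes P R :: real
  assumes multiple: "\<And>u. u^3 + P*u + R = 0 \<Longrightarrow> 3*u^2 + P = 0"
  shows "P = 0 \<and> R = 0"
proof -
  define M where "M = 1 + \<bar>P\<bar> + \<bar>R\<bar>"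
  have M1: "M \<ge> 1" unfolding M_def by simp
  have M2: "M*M \<ge> M + \<bar>P\<bar>*M"
    using mult_left_mono[of "1 + \<bar>P\<bar>" M M] M1 unfolding M_def by (simp add: algebra_simps)
  have M3: "M^3 \<ge> M*M" using M1 by (simp add: power3_eq_cube)
  have PM: "\<bar>P*M\<bar> = \<bar>P\<bar>*M" using M1 by (simp add: abs_mult)
  have "M^3 + P*M + R \<ge> 0" "-(M^3) - P*M + R \<le> 0"
    using M2 M3 PM M_def by linarith+
  then have "M^3 + P*M + R \<ge> 0" "(-M)^3 + P*(-M) + R \<le> 0" by simp_all
  moreover have "continuous_on {-M..M} (\<lambda>u. u^3 + P*u + R)" by (intro continuous_intros)
  ultimately obtain u0 where u0: "u0^3 + P*u0 + R = 0"
    using IVT'[of "\<lambda>u. u^3 + P*u + R" "-M" 0 M] M1 by auto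
  then have P: "P = -3*u0^2" using multiple[OF u0] by linarith
  then have R: "R = 2*u0^3" using u0 by (simp add: power2_eq_square power3_eq_cube algebra_simps)
  have "(-2*u0)^3 + P*(-2*u0) + R = 0" using P R by (simp add: power2_eq_square power3_eq_cube algebra_simps)
  then have "3*(-2*u0)^2 + P = 0" by (rule multiple)
  then have "u0 = 0" using P by (simp add: power2_eq_square algebra_simps)
  then show ?thesis using P R by simp
qed

lemma cubic_multiple_roots:
  fixes a b c d :: real
  assumes a: "a \<noteq> 0"
    and multiple: "\<And>s. a * s^3 + b * s^2 + c * s + d = 0 \<Longrightarrow> 3*a * s^2 + 2*b * s + c = 0"
  shows "27*a^2*d = b^3"
proof -
  define k where "k = b/(3*a)"
  define P where "P = c/a - 3*k^2"
  define R where "R = d/a - k^3 - P*k"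
  have b: "b = 3*a*k" unfolding k_def using a by simp
  have c: "c = a*(P + 3*k^2)" unfolding P_def using a by (simp add: algebra_simps)
  have d: "d = a*(R + k^3 + P*k)" unfolding R_def using a by (simp add: algebra_simps)
  have shift: "a * s^3 + b * s^2 + c * s + d = a*((s+k)^3 + P*(s+k) + R)" for s
    unfolding b c d by (simp add: power2_eq_square power3_eq_cube algebra_simps)
  have shift': "3*a * s^2 + 2*b * s + c = a*(3*(s+k)^2 + P)" for s
    unfolding b c by (simp add: power2_eq_square algebra_simps)
  have "3*u^2 + P = 0" if "u^3 + P*u + R = 0" for u
    using multiple[of "u - k"] shift[of "u - k"] shift'[of "u - k"] that a by simp
  then have "P = 0 \<and> R = 0" by (rule depressed_cubic_multiple_roots)
  then have "d = a * k^3" unfolding R_def using a by (simp add: field_simps)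
  then show ?thesis unfolding k_def using a by (simp add: field_simps power2_eq_square power3_eq_cube)
qed

lemma poly_degree_le_3:
  fixes H :: "'a::comm_semiring_1 poly"
  assumes "degree H \<le> 3"
  shows "poly H s = coeff H 0 + coeff H 1 * s + coeff H 2 * s^2 + coeff H 3 * s^3"
proof -
  have "poly H s = (\<Sum>i\<le>3. coeff H i * s ^ i)"
    unfolding poly_altdef by (rule sum.mono_neutral_left) (use assms in \<open>auto simp: coeff_eq_0\<close>)
  then show ?thesis by (simp add: numeral_3_eq_3 numeral_2_eq_2 atMost_Suc algebra_simps)
qed

lemma cubic_poly_multiple_roots:
  fixes H :: "real poly"
  assumes "degree H \<le> 3" "coeff H 3 \<noteq> 0"
    and multiple: "\<And>s. poly H s = 0 \<Longrightarrow> poly (pderiv H) s = 0"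
  shows "27 * coeff H 3 ^ 2 * coeff H 0 = coeff H 2 ^ 3"
proof (rule cubic_multiple_roots)
  have "degree (pderiv H) \<le> 3" using assms(1) by (simp add: degree_pderiv)
  then have "poly (pderiv H) s = 3 * coeff H 3 * s^2 + 2 * coeff H 2 * s + coeff H 1" for s
    using poly_degree_le_3[of "pderiv H" s] assms(1)
    by (simp add: coeff_pderiv coeff_eq_0 numeral_3_eq_3 numeral_2_eq_2 algebra_simps)
  then show "3 * coeff H 3 * s^2 + 2 * coeff H 2 * s + coeff H 1 = 0"
    if "coeff H 3 * s^3 + coeff H 2 * s^2 + coeff H 1 * s + coeff H 0 = 0" for s
    using multiple[of s] that poly_degree_le_3[OF assms(1), of s] by (simp add: algebra_simps)
qed fact

section \<open>Cubic forms all of whose zeros are singular\<close>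

definition linear_rpoly :: "real^'n \<Rightarrow> ('n::finite) rpoly" where
  "linear_rpoly c = (\<Sum>j\<in>UNIV. Poly_Mapping.single (Poly_Mapping.single j 1) (c$j))"

lemma monomial_eval_single_one: "monomial_eval (Poly_Mapping.single j 1) y = y $ j"
proof -
  have "monomial_eval (Poly_Mapping.single j 1) y = (\<Prod>i\<in>UNIV. if i = j then y $ j else 1)"
    unfolding monomial_eval_def by (rule prod.cong) (auto simp: lookup_single)
  then show ?thesis by simp
qed

lemma rpoly_eval_linear_rpoly: "rpoly_eval (linear_rpoly c) y = c \<bullet> y"
  by (simp add: linear_rpoly_def inner_vec_def rpoly_eval_sum rpoly_eval_single
      monomial_eval_single_one[simplified])

lemma singular_cubic_form_eq_cube:
  fixes f :: "('n::finite) rpoly"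
  assumes hom: "homogeneous_of_degree f 3" and fp: "rpoly_eval f p \<noteq> 0"
    and singular: "\<And>z. rpoly_eval f z = 0 \<Longrightarrow> rpoly_grad f z = 0"
  shows "27 * rpoly_eval f p ^ 2 * rpoly_eval f y = (y \<bullet> rpoly_grad f p) ^ 3"
proof -
  obtain H where deg: "degree H \<le> 3" and top: "coeff H 3 = rpoly_eval f p"
    and H: "\<And>s. poly H s = rpoly_eval f (s *\<^sub>R p + y)"
    using homogeneous_rpoly_restrict_line[OF hom] by metis
  have line: "poly H = (\<lambda>s. rpoly_eval f (s *\<^sub>R p + y))" using H by auto
  have "poly (pderiv H) s = 0" if "poly H s = 0" for s
  proof -
    have "((\<lambda>s. rpoly_eval f (s *\<^sub>R p + y)) has_real_derivative p \<bullet> rpoly_grad f (s *\<^sub>R p + y)) (at s)"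
      by (rule has_real_derivative_rpoly_eval_line)
    then have "(poly H has_real_derivative 0) (at s)"
      using singular that by (simp add: line)
    then show ?thesis using poly_DERIV DERIV_unique by blast
  qed
  then have "27 * coeff H 3 ^ 2 * coeff H 0 = coeff H 2 ^ 3"
    using cubic_poly_multiple_roots deg top fp by metis
  moreover have "coeff H 0 = rpoly_eval f y" using H[of 0] by (simp add: poly_0_coeff_0)
  moreover have "coeff H 2 = y \<bullet> rpoly_grad f p"
    using homogeneous_restrict_line_coeff_pred[OF hom _ fp deg top H] by simp
  ultimately show ?thesis using top by simp
qed

theorem lemma1:
  fixes f :: "('n::{finite,linorder}) rpoly"
  assumes "homogeneous_of_degree f 3"
    and "irreducible f"
    and "f \<noteq> 0"
  shows "\<exists>x \<in> zero_set f. rpoly_grad f x \<noteq> 0"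
proof (rule ccontr)
  assume "\<not> ?thesis"
  then have singular: "\<And>z. rpoly_eval f z = 0 \<Longrightarrow> rpoly_grad f z = 0"
    by (auto simp: zero_set_def)
  obtain p where fp: "rpoly_eval f p \<noteq> 0"
    using rpoly_eq_zero_if_eval_eq_zero assms(3) by blast
  define ell where "ell = linear_rpoly (rpoly_grad f p)"
  define A where "A = Poly_Mapping.single 0 (1 / (27 * rpoly_eval f p ^ 2)) * ell"
  have "rpoly_eval (f - A * (ell * ell)) y = 0" for y
    using singular_cubic_form_eq_cube[OF assms(1) fp singular, of y] fp
    by (simp add: A_def ell_def rpoly_eval_diff rpoly_eval_mult rpoly_eval_single
        rpoly_eval_linear_rpoly monomial_eval_def inner_commute field_simps power3_eq_cube)
  then have "f = A * (ell * ell)" using rpoly_eq_zero_if_eval_eq_zero by fastforce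
  then have "A dvd 1 \<or> ell * ell dvd 1" using assms(2) by (simp add: irreducible_def)
  moreover have "rpoly_eval ell 0 = 0" by (simp add: ell_def rpoly_eval_linear_rpoly)
  ultimately show False
    using rpoly_eval_unit_nonzero[of A 0] rpoly_eval_unit_nonzero[of "ell * ell" 0]
    by (auto simp: A_def rpoly_eval_mult)
qed

end
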